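(* Let $\mathbb K$ be $\mathbb R$ or $\mathbb C$ and let $(\mathcal P,\cdot,[\,,\,])$ be a transposed Poisson superalgebra over $\mathbb K$. Let $D:\mathcal P\to\mathcal P$ be an even derivation of the Lie superalgebra $(\mathcal P,[\,,\,])$, i.e. $D$ is linear, $|D(x)|=|x|$ and $D([x,y])=[D(x),y]+[x,D(y)]$ for homogeneous $x,y$. Then for all homogeneous $x,y,z\in\mathcal P$, $$D(x)\cdot D([y,z])+(-1)^{|x|(|y|+|z|)}D(y)\cdot D([z,x])+(-1)^{(|x|+|y|)|z|}D(z)\cdot D([x,y])$$ $$+\,x\cdot[D(y),D(z)]+(-1)^{|x|(|y|+|z|)}\,y\cdot[D(z),D(x)]+(-1)^{(|x|+|y|)|z|}\,z\cdot[D(x),D(y)]=0.$$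
   Context: A transposed Poisson superalgebra is a triple $(\mathcal P,\cdot,[\,,\,])$ where $\mathcal P=\mathcal P_0\oplus\mathcal P_1$ is a super vector space over $\mathbb K$, $(\mathcal P,\cdot)$ is a commutative associative superalgebra, $(\mathcal P,[\,,\,])$ is a Lie superalgebra, and for all homogeneous $x,y,z\in\mathcal P$ one has $2\,z\cdot[x,y]=[z\cdot x,y]+(-1)^{|x||z|}[x,z\cdot y]$. Here $|x|\in\mathbb Z_2$ denotes the parity of a homogeneous element. *)

theory Defs
  imports Complex_Main
begin

definition is_R_or_C :: "'k::field itself \<Rightarrow> bool" where
  "is_R_or_C _ \<longleftrightarrow>
     (\<exists>f::'k \<Rightarrow> real. bij f \<and> (\<forall>a b. f (a + b) = f a + f b) \<and> (\<forall>a b. f (a * b) = f a * f b) \<and> f 1 = 1)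
   \<or> (\<exists>f::'k \<Rightarrow> complex. bij f \<and> (\<forall>a b. f (a + b) = f a + f b) \<and> (\<forall>a b. f (a * b) = f a * f b) \<and> f 1 = 1)"

definition grade :: "'v set \<Rightarrow> 'v set \<Rightarrow> nat \<Rightarrow> 'v set" where
  "grade P0 P1 a = (if a = 0 then P0 else P1)"

definition super_vector_space ::
  "('k::field \<Rightarrow> 'v::ab_group_add \<Rightarrow> 'v) \<Rightarrow> 'v set \<Rightarrow> 'v set \<Rightarrow> bool" where
  "super_vector_space scale P0 P1 \<longleftrightarrow>
     vector_space scale \<and> module.subspace scale P0 \<and> module.subspace scale P1 \<and>
     P0 \<inter> P1 = {0} \<and> (\<forall>v. \<exists>u\<in>P0. \<exists>w\<in>P1. v = u + w)"

definition bilinear_op ::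
  "('k::field \<Rightarrow> 'v::ab_group_add \<Rightarrow> 'v) \<Rightarrow> ('v \<Rightarrow> 'v \<Rightarrow> 'v) \<Rightarrow> bool" where
  "bilinear_op scale m \<longleftrightarrow>
     (\<forall>x y z. m (x + y) z = m x z + m y z) \<and> (\<forall>x y z. m x (y + z) = m x y + m x z) \<and>
     (\<forall>c x y. m (scale c x) y = scale c (m x y)) \<and> (\<forall>c x y. m x (scale c y) = scale c (m x y))"

definition graded_op :: "'v set \<Rightarrow> 'v set \<Rightarrow> ('v \<Rightarrow> 'v \<Rightarrow> 'v) \<Rightarrow> bool" where
  "graded_op P0 P1 m \<longleftrightarrow>
     (\<forall>a<2. \<forall>b<2. \<forall>x\<in>grade P0 P1 a. \<forall>y\<in>grade P0 P1 b. m x y \<in> grade P0 P1 ((a + b) mod 2))"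

definition comm_assoc_superalgebra ::
  "('k::field \<Rightarrow> 'v::ab_group_add \<Rightarrow> 'v) \<Rightarrow> 'v set \<Rightarrow> 'v set \<Rightarrow> ('v \<Rightarrow> 'v \<Rightarrow> 'v) \<Rightarrow> bool" where
  "comm_assoc_superalgebra scale P0 P1 m \<longleftrightarrow>
     super_vector_space scale P0 P1 \<and> bilinear_op scale m \<and> graded_op P0 P1 m \<and>
     (\<forall>x y z. m (m x y) z = m x (m y z)) \<and>
     (\<forall>a<2. \<forall>b<2. \<forall>x\<in>grade P0 P1 a. \<forall>y\<in>grade P0 P1 b.
        m x y = scale ((-1) ^ (a * b)) (m y x))"

definition lie_superalgebra ::
  "('k::field \<Rightarrow> 'v::ab_group_add \<Rightarrow> 'v) \<Rightarrow> 'v set \<Rightarrow> 'v set \<Rightarrow> ('v \<Rightarrow> 'v \<Rightarrow> 'v) \<Rightarrow> bool" where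
  "lie_superalgebra scale P0 P1 br \<longleftrightarrow>
     super_vector_space scale P0 P1 \<and> bilinear_op scale br \<and> graded_op P0 P1 br \<and>
     (\<forall>a<2. \<forall>b<2. \<forall>x\<in>grade P0 P1 a. \<forall>y\<in>grade P0 P1 b.
        br x y = - scale ((-1) ^ (a * b)) (br y x)) \<and>
     (\<forall>a<2. \<forall>b<2. \<forall>c<2. \<forall>x\<in>grade P0 P1 a. \<forall>y\<in>grade P0 P1 b. \<forall>z\<in>grade P0 P1 c.
        br x (br y z) = br (br x y) z + scale ((-1) ^ (a * b)) (br y (br x z)))"

definition transposed_poisson_superalgebra ::
  "('k::field \<Rightarrow> 'v::ab_group_add \<Rightarrow> 'v) \<Rightarrow> 'v set \<Rightarrow> 'v set \<Rightarrow> ('v \<Rightarrow> 'v \<Rightarrow> 'v) \<Rightarrow> ('v \<Rightarrow> 'v \<Rightarrow> 'v) \<Rightarrow> bool" where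
  "transposed_poisson_superalgebra scale P0 P1 m br \<longleftrightarrow>
     comm_assoc_superalgebra scale P0 P1 m \<and> lie_superalgebra scale P0 P1 br \<and>
     (\<forall>a<2. \<forall>b<2. \<forall>c<2. \<forall>x\<in>grade P0 P1 a. \<forall>y\<in>grade P0 P1 b. \<forall>z\<in>grade P0 P1 c.
        scale 2 (m z (br x y)) = br (m z x) y + scale ((-1) ^ (a * c)) (br x (m z y)))"

definition even_derivation ::
  "('k::field \<Rightarrow> 'v::ab_group_add \<Rightarrow> 'v) \<Rightarrow> 'v set \<Rightarrow> 'v set \<Rightarrow> ('v \<Rightarrow> 'v \<Rightarrow> 'v) \<Rightarrow> ('v \<Rightarrow> 'v) \<Rightarrow> bool" where
  "even_derivation scale P0 P1 br D \<longleftrightarrow>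
     Vector_Spaces.linear scale scale D \<and> D ` P0 \<subseteq> P0 \<and> D ` P1 \<subseteq> P1 \<and>
     (\<forall>a<2. \<forall>b<2. \<forall>x\<in>grade P0 P1 a. \<forall>y\<in>grade P0 P1 b.
        D (br x y) = br (D x) y + br x (D y))"

end

theory Submission
  imports Defs
begin

text \<open>
  Over a field of characteristic different from 2, every transposed Poisson superalgebra satisfies
  the graded cyclic identity \<open>u\<cdot>[v,w] + \<epsilon> v\<cdot>[w,u] + \<epsilon>' w\<cdot>[u,v] = 0\<close>: adding the three
  instances of the compatibility law for the cyclic permutations of \<open>(u,v,w)\<close> and rewriting each
  term with supercommutativity and super-antisymmetry, the right-hand sides cancel, so twice the
  cyclic sum vanishes. For an even derivation \<open>D\<close>, expanding \<open>D[y,z]\<close>, \<open>D[z,x]\<close>, \<open>D[x,y]\<close> by the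
  Leibniz rule splits the twelve resulting terms into the cyclic sums of the triples
  \<open>(Dx,Dy,z)\<close>, \<open>(Dy,Dz,x)\<close> and \<open>(Dz,Dx,y)\<close>, each of which is zero.
\<close>

lemma is_R_or_C_two_neq_zero:
  assumes "is_R_or_C TYPE('k::field)"
  shows "(2::'k) \<noteq> 0"
proof
  assume two: "(2::'k) = 0"
  have False if "\<forall>a b. f (a + b) = f a + f b" "f 1 = 1" for f :: "'k \<Rightarrow> 'r::ring_char_0"
  proof -
    have "f 0 = 0" and "f 2 = 2"
      using that by (metis add_cancel_right_right, metis one_add_one)
    with two show False by simp
  qed
  from this[of "_ :: 'k \<Rightarrow> real"] this[of "_ :: 'k \<Rightarrow> complex"] show False
    using assms unfolding is_R_or_C_def by (elim disjE exE conjE) auto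
qed

lemma transposed_poisson_superalgebra_vector_space:
  "transposed_poisson_superalgebra scale P0 P1 m br \<Longrightarrow> vector_space scale"
  by (simp add: transposed_poisson_superalgebra_def comm_assoc_superalgebra_def
      super_vector_space_def)

lemma transposed_poisson_superalgebra_mult_add_right:
  "transposed_poisson_superalgebra scale P0 P1 m br \<Longrightarrow> m x (y + z) = m x y + m x z"
  by (simp add: transposed_poisson_superalgebra_def comm_assoc_superalgebra_def bilinear_op_def)

lemma even_derivation_grade:
  assumes "even_derivation scale P0 P1 br D" "u \<in> grade P0 P1 n"
  shows "D u \<in> grade P0 P1 n"
  using assms unfolding even_derivation_def grade_def by (auto split: if_splits)

lemma even_derivation_Leibniz:
  assumes "even_derivation scale P0 P1 br D" "p < 2" "q < 2"
    "u \<in> grade P0 P1 p" "v \<in> grade P0 P1 q"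
  shows "D (br u v) = br (D u) v + br u (D v)"
  using assms unfolding even_derivation_def by blast

lemma comm_assoc_superalgebra_mult_grade:
  assumes "comm_assoc_superalgebra scale P0 P1 m" "p < 2" "q < 2"
    "u \<in> grade P0 P1 p" "v \<in> grade P0 P1 q"
  shows "m u v \<in> grade P0 P1 ((p + q) mod 2)"
  using assms unfolding comm_assoc_superalgebra_def graded_op_def by blast

lemma comm_assoc_superalgebra_commute:
  assumes "comm_assoc_superalgebra scale P0 P1 m" "p < 2" "q < 2"
    "u \<in> grade P0 P1 p" "v \<in> grade P0 P1 q"
  shows "m u v = scale ((-1) ^ (p * q)) (m v u)"
  using assms unfolding comm_assoc_superalgebra_def by blast

lemma lie_superalgebra_anticommute:
  assumes "lie_superalgebra scale P0 P1 br" "p < 2" "q < 2"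
    "u \<in> grade P0 P1 p" "v \<in> grade P0 P1 q"
  shows "br u v = - scale ((-1) ^ (p * q)) (br v u)"
  using assms unfolding lie_superalgebra_def by blast

lemma lie_superalgebra_bracket_scale:
  assumes "lie_superalgebra scale P0 P1 br"
  shows "br (scale c u) v = scale c (br u v)" "br u (scale c v) = scale c (br u v)"
  using assms unfolding lie_superalgebra_def bilinear_op_def by auto

lemma transposed_poisson_superalgebra_compatibility:
  assumes "transposed_poisson_superalgebra scale P0 P1 m br" "p < 2" "q < 2" "r < 2"
    "u \<in> grade P0 P1 p" "v \<in> grade P0 P1 q" "w \<in> grade P0 P1 r"
  shows "scale 2 (m w (br u v)) = br (m w u) v + scale ((-1) ^ (p * r)) (br u (m w v))"
  using assms unfolding transposed_poisson_superalgebra_def by blast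

definition super_cyclic_sum ::
  "('k::field \<Rightarrow> 'v::ab_group_add \<Rightarrow> 'v) \<Rightarrow> ('v \<Rightarrow> 'v \<Rightarrow> 'v) \<Rightarrow> ('v \<Rightarrow> 'v \<Rightarrow> 'v) \<Rightarrow>
    nat \<Rightarrow> nat \<Rightarrow> nat \<Rightarrow> 'v \<Rightarrow> 'v \<Rightarrow> 'v \<Rightarrow> 'v" where
  "super_cyclic_sum scale m br p q r u v w =
     m u (br v w) + scale ((-1) ^ (p * (q + r))) (m v (br w u))
     + scale ((-1) ^ ((p + q) * r)) (m w (br u v))"

lemma transposed_poisson_super_cyclic_sum:
  fixes scale :: "'k::field \<Rightarrow> 'v::ab_group_add \<Rightarrow> 'v"
  assumes two: "(2::'k) \<noteq> 0"
    and TP: "transposed_poisson_superalgebra scale P0 P1 m br"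
    and pqr: "p < 2" "q < 2" "r < 2"
    and uvw: "u \<in> grade P0 P1 p" "v \<in> grade P0 P1 q" "w \<in> grade P0 P1 r"
  shows "super_cyclic_sum scale m br p q r u v w = 0"
proof -
  have CA: "comm_assoc_superalgebra scale P0 P1 m" and LS: "lie_superalgebra scale P0 P1 br"
    using TP unfolding transposed_poisson_superalgebra_def by auto
  interpret vector_space scale
    using TP by (rule transposed_poisson_superalgebra_vector_space)
  note compat = transposed_poisson_superalgebra_compatibility[OF TP]
    and comm = comm_assoc_superalgebra_commute[OF CA]
    and anti = lie_superalgebra_anticommute[OF LS]
    and grade_mult = comm_assoc_superalgebra_mult_grade[OF CA]
  have "(p + q) mod 2 < 2" "(p + r) mod 2 < 2" "(q + r) mod 2 < 2" by auto
  note rules =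
    compat[OF pqr(2,3,1) uvw(2,3,1)] compat[OF pqr(3,1,2) uvw(3,1,2)] compat[OF pqr uvw]
    comm[OF pqr(2,1) uvw(2,1)] comm[OF pqr(3,1) uvw(3,1)] comm[OF pqr(3,2) uvw(3,2)]
    anti[OF pqr(3) \<open>(p + q) mod 2 < 2\<close> uvw(3) grade_mult[OF pqr(1,2) uvw(1,2)]]
    anti[OF \<open>(p + r) mod 2 < 2\<close> pqr(2) grade_mult[OF pqr(1,3) uvw(1,3)] uvw(2)]
    anti[OF pqr(1) \<open>(q + r) mod 2 < 2\<close> uvw(1) grade_mult[OF pqr(2,3) uvw(2,3)]]
    lie_superalgebra_bracket_scale[OF LS]
  have "scale 2 (super_cyclic_sum scale m br p q r u v w)
      = scale 2 (m u (br v w)) + scale ((-1) ^ (p * (q + r))) (scale 2 (m v (br w u)))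
        + scale ((-1) ^ ((p + q) * r)) (scale 2 (m w (br u v)))"
    unfolding super_cyclic_sum_def by (simp add: scale_right_distrib mult.commute)
  also have "\<dots> = 0"
    unfolding rules
    using less_2_cases[OF pqr(1)] less_2_cases[OF pqr(2)] less_2_cases[OF pqr(3)]
    by (elim disjE; simp add: scale_right_distrib)
  finally show ?thesis
    using two by simp
qed

theorem lemma7:
  fixes scale :: "'k::field \<Rightarrow> 'v::ab_group_add \<Rightarrow> 'v"
    and P0 P1 :: "'v set"
    and m br :: "'v \<Rightarrow> 'v \<Rightarrow> 'v"
    and D :: "'v \<Rightarrow> 'v"
    and a b c :: nat
    and x y z :: 'v
  assumes "is_R_or_C TYPE('k)"
    and "transposed_poisson_superalgebra scale P0 P1 m br"
    and "even_derivation scale P0 P1 br D"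
    and "a < 2" "b < 2" "c < 2"
    and "x \<in> grade P0 P1 a" "y \<in> grade P0 P1 b" "z \<in> grade P0 P1 c"
  shows "m (D x) (D (br y z))
         + scale ((-1) ^ (a * (b + c))) (m (D y) (D (br z x)))
         + scale ((-1) ^ ((a + b) * c)) (m (D z) (D (br x y)))
         + m x (br (D y) (D z))
         + scale ((-1) ^ (a * (b + c))) (m y (br (D z) (D x)))
         + scale ((-1) ^ ((a + b) * c)) (m z (br (D x) (D y))) = 0"
proof -
  note TP = assms(2) and D = assms(3) and abc = assms(4-6) and xyz = assms(7-9)
  interpret vector_space scale
    using TP by (rule transposed_poisson_superalgebra_vector_space)
  have Dxyz: "D x \<in> grade P0 P1 a" "D y \<in> grade P0 P1 b" "D z \<in> grade P0 P1 c"
    using even_derivation_grade[OF D] xyz by auto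
  note cyclic = transposed_poisson_super_cyclic_sum[OF is_R_or_C_two_neq_zero[OF assms(1)] TP]
  have "?thesis \<longleftrightarrow>
      super_cyclic_sum scale m br a b c (D x) (D y) z
      + scale ((-1) ^ ((a + b) * c)) (super_cyclic_sum scale m br c a b (D z) (D x) y)
      + scale ((-1) ^ (a * (b + c))) (super_cyclic_sum scale m br b c a (D y) (D z) x) = 0"
    unfolding super_cyclic_sum_def even_derivation_Leibniz[OF D abc(2,3) xyz(2,3)]
      even_derivation_Leibniz[OF D abc(3,1) xyz(3,1)] even_derivation_Leibniz[OF D abc(1,2) xyz(1,2)]
      transposed_poisson_superalgebra_mult_add_right[OF TP]
    using less_2_cases[OF abc(1)] less_2_cases[OF abc(2)] less_2_cases[OF abc(3)]
    by (elim disjE; simp add: scale_right_distrib algebra_simps)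
  then show ?thesis
    using cyclic[OF abc Dxyz(1,2) xyz(3)] cyclic[OF abc(3,1,2) Dxyz(3,1) xyz(2)]
      cyclic[OF abc(2,3,1) Dxyz(2,3) xyz(1)]
    by simp
qed

end
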